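(* Let $K$ be a convex set (in some real vector space). Let $\mathcal{D}(K)$ be the collection of all finite ensembles over $K$, regarded as a test space with outcome set $X(K)=(0,1]\times K$. Then the only probability weight on $\mathcal{D}(K)$ is the function $\rho:(0,1]\times K\to[0,1]$ given by $\rho((t,\alpha))=t$.
   Context: A finite ensemble over $K$ is a finite set of pairs $\{(t_1,\alpha_1),\dots,(t_n,\alpha_n)\}$ with $\alpha_i\in K$, $t_i\in(0,1]$ and $\sum_{i=1}^n t_i=1$. A probability weight on a collection $\mathcal{M}$ of sets (a test space) with $X=\bigcup\mathcal{M}$ is a function $f:X\to[0,1]$ such that $\sum_{x\in E}f(x)=1$ for every $E\in\mathcal{M}$. *)

theory Defs
  imports "HOL-Analysis.Analysis"
begin

definition finite_ensembles :: "'a set \<Rightarrow> (real \<times> 'a) set set" where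
  "finite_ensembles K =
     {E. finite E \<and> E \<subseteq> {0<..1} \<times> K \<and> (\<Sum>x\<in>E. fst x) = 1}"

definition probability_weight :: "'x set set \<Rightarrow> ('x \<Rightarrow> real) \<Rightarrow> bool" where
  "probability_weight M f \<longleftrightarrow>
     (\<forall>x\<in>\<Union>M. f x \<in> {0..1}) \<and> (\<forall>E\<in>M. (\<Sum>x\<in>E. f x) = 1)"

end

theory Submission
  imports Defs
begin

(* Fix alpha in K and put h s = f (s, alpha). The sets {(s, alpha) | s in S}, for finite
   S in (0,1] of distinct reals summing to 1, are ensembles, so sum h S = 1 for all such S.
   Completing S and the singleton {sum S} by a common disjoint set shows sum h S = h (sum S);
   hence h is additive and nonnegative on (0,1], so linear, and h 1 = 1 gives h s = s. *)

lemma exists_finite_sum_avoiding: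
  fixes A :: "real set"
  assumes "finite A" "0 < s" "s \<le> 1"
  shows "\<exists>S. finite S \<and> S \<subseteq> {0<..1} \<and> S \<inter> A = {} \<and> \<Sum>S = s"
proof (cases "s \<in> A")
  case False
  then show ?thesis using assms by (intro exI[of _ "{s}"]) auto
next
  case True
  (* split s = r + (s - r) with r < s/2 chosen so that neither part lies in A *)
  let ?B = "A \<union> (\<lambda>x. s - x) ` A"
  have "infinite ({0<..<s/2} - ?B)"
    using assms by (intro Diff_infinite_finite) (auto simp: infinite_Ioo)
  then obtain r where r: "r \<in> {0<..<s/2}" "r \<notin> ?B"
    using infinite_imp_nonempty by blast
  have "s - r \<notin> A"
  proof
    assume "s - r \<in> A"
    then have "s - (s - r) \<in> (\<lambda>x. s - x) ` A" by blast
    then show False using r by auto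
  qed
  moreover have "r \<noteq> s - r" using r by auto
  ultimately show ?thesis using r assms
    by (intro exI[of _ "{r, s - r}"]) auto
qed

lemma sum_eq_at_sum_if_sum_one:
  fixes h :: "real \<Rightarrow> real"
  assumes one: "\<And>S. finite S \<Longrightarrow> S \<subseteq> {0<..1} \<Longrightarrow> \<Sum>S = 1 \<Longrightarrow> sum h S = 1"
    and S: "finite S" "S \<subseteq> {0<..1}" "\<Sum>S = s" and s: "0 < s" "s \<le> 1"
  shows "sum h S = h s"
proof (cases "s = 1")
  case True
  then show ?thesis using one[OF S(1,2)] one[of "{1}"] S(3) by simp
next
  case False
  obtain R where R: "finite R" "R \<subseteq> {0<..1}" "R \<inter> (insert s S) = {}" "\<Sum>R = 1 - s"
    using exists_finite_sum_avoiding[of "insert s S" "1 - s"] S(1) s False by auto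
  have disj: "S \<inter> R = {}" using R by auto
  have "\<Sum>(S \<union> R) = 1" using R S disj by (simp add: sum.union_disjoint)
  then have "sum h S + sum h R = 1"
    using one[of "S \<union> R"] R S disj by (simp add: sum.union_disjoint)
  moreover have "h s + sum h R = 1"
    using one[of "insert s R"] R s by auto
  ultimately show ?thesis by simp
qed

lemma additive_nonneg_mono:
  fixes h :: "real \<Rightarrow> real"
  assumes add: "\<And>a b. 0 < a \<Longrightarrow> 0 < b \<Longrightarrow> a + b \<le> 1 \<Longrightarrow> h (a + b) = h a + h b"
    and nonneg: "\<And>x. 0 < x \<Longrightarrow> x \<le> 1 \<Longrightarrow> 0 \<le> h x"
    and "0 < a" "a \<le> b" "b \<le> 1"
  shows "h a \<le> h b"
proof (cases "a = b")
  case False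
  then have "h b = h a + h (b - a)" using add[of a "b - a"] assms(3-5) by simp
  then show ?thesis using nonneg[of "b - a"] assms(3-5) False by simp
qed simp

lemma additive_of_nat_mult:
  fixes h :: "real \<Rightarrow> real"
  assumes add: "\<And>a b. 0 < a \<Longrightarrow> 0 < b \<Longrightarrow> a + b \<le> 1 \<Longrightarrow> h (a + b) = h a + h b"
    and "0 < n" "0 < x" "real n * x \<le> 1"
  shows "h (real n * x) = real n * h x"
  using assms(2,4)
proof (induction n rule: nat_induct_non_zero)
  case 1
  then show ?case by simp
next
  case (Suc n)
  have "h (real (Suc n) * x) = h (real n * x + x)" by (simp add: algebra_simps)
  also have "\<dots> = h (real n * x) + h x"
    using Suc.hyps Suc.prems \<open>0 < x\<close> by (intro add) (auto simp: algebra_simps)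
  also have "\<dots> = real (Suc n) * h x"
    using Suc \<open>0 < x\<close> by (simp add: algebra_simps)
  finally show ?case .
qed

lemma additive_of_nat_divide:
  fixes h :: "real \<Rightarrow> real"
  assumes add: "\<And>a b. 0 < a \<Longrightarrow> 0 < b \<Longrightarrow> a + b \<le> 1 \<Longrightarrow> h (a + b) = h a + h b"
    and "1 \<le> k" "k \<le> n"
  shows "h (real k / real n) = real k / real n * h 1"
proof -
  have "h 1 = real n * h (1 / real n)"
    using additive_of_nat_mult[OF add, of n "1 / real n"] assms(2,3) by simp
  moreover have "h (real k * (1 / real n)) = real k * h (1 / real n)"
    using additive_of_nat_mult[OF add, of k "1 / real n"] assms(2,3) by simp
  moreover have "real n \<noteq> 0" using assms(2,3) by simp
  ultimately show ?thesis by simp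
qed

lemma additive_nonneg_approx_linear:
  fixes h :: "real \<Rightarrow> real"
  assumes add: "\<And>a b. 0 < a \<Longrightarrow> 0 < b \<Longrightarrow> a + b \<le> 1 \<Longrightarrow> h (a + b) = h a + h b"
    and nonneg: "\<And>x. 0 < x \<Longrightarrow> x \<le> 1 \<Longrightarrow> 0 \<le> h x"
    and t: "0 < t" "t \<le> 1" and n: "1 \<le> n"
  shows "\<bar>h t - t * h 1\<bar> \<le> h 1 / real n"
proof -
  note mono = additive_nonneg_mono[of h, OF add nonneg]
  note frac = additive_of_nat_divide[of h, OF add]
  define m where "m = nat \<lceil>t * real n\<rceil>"
  have "0 < t * real n" "t * real n \<le> real n" using t n by simp_all
  then have "real m = of_int \<lceil>t * real n\<rceil>" "0 < \<lceil>t * real n\<rceil>"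
    unfolding m_def by simp_all
  then have m: "real m - 1 < t * real n" "t * real n \<le> real m" "1 \<le> m" "m \<le> n"
    using \<open>t * real n \<le> real n\<close> by (linarith, linarith, linarith, simp add: m_def)
  have "0 \<le> h 1" using nonneg by simp
  have "h t \<le> real m / real n * h 1"
    using mono[of t "real m / real n"] frac[of m n] m t n by (simp add: field_simps)
  also have "\<dots> \<le> (t + 1 / real n) * h 1"
    using m n \<open>0 \<le> h 1\<close> by (intro mult_right_mono) (simp_all add: field_simps)
  finally have upper: "h t - t * h 1 \<le> h 1 / real n" by (simp add: algebra_simps)
  have "(t - 1 / real n) * h 1 \<le> real (m - 1) / real n * h 1"
    using m n \<open>0 \<le> h 1\<close> by (intro mult_right_mono) (simp_all add: of_nat_diff field_simps)
  also have "\<dots> \<le> h t"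
  proof (cases "m = 1")
    case True
    then show ?thesis using nonneg t by simp
  next
    case False
    then have "0 < real (m - 1) / real n" "real (m - 1) / real n \<le> t"
      using m n by (simp_all add: of_nat_diff field_simps)
    then have "h (real (m - 1) / real n) \<le> h t" using mono t by blast
    then show ?thesis using frac[of "m - 1" n] m False by simp
  qed
  finally have lower: "t * h 1 - h t \<le> h 1 / real n" by (simp add: algebra_simps)
  show ?thesis using upper lower by (simp add: abs_le_iff)
qed

lemma additive_nonneg_linear:
  fixes h :: "real \<Rightarrow> real"
  assumes add: "\<And>a b. 0 < a \<Longrightarrow> 0 < b \<Longrightarrow> a + b \<le> 1 \<Longrightarrow> h (a + b) = h a + h b"
    and nonneg: "\<And>x. 0 < x \<Longrightarrow> x \<le> 1 \<Longrightarrow> 0 \<le> h x"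
    and t: "0 < t" "t \<le> 1"
  shows "h t = t * h 1"
proof (rule ccontr)
  assume "h t \<noteq> t * h 1"
  then have d: "0 < \<bar>h t - t * h 1\<bar>" by simp
  obtain n where n: "h 1 / \<bar>h t - t * h 1\<bar> < real n"
    using reals_Archimedean2 by blast
  moreover have "0 \<le> h 1 / \<bar>h t - t * h 1\<bar>" using nonneg[of 1] by simp
  ultimately have "1 \<le> n" by linarith
  then have "\<bar>h t - t * h 1\<bar> * real n \<le> h 1"
    using additive_nonneg_approx_linear[OF add nonneg t] by (simp add: pos_le_divide_eq)
  moreover have "h 1 < real n * \<bar>h t - t * h 1\<bar>"
    using n d by (simp add: pos_divide_less_eq)
  ultimately show False by (simp add: mult.commute)
qed

lemma eq_id_if_sum_one:
  fixes h :: "real \<Rightarrow> real"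
  assumes one: "\<And>S. finite S \<Longrightarrow> S \<subseteq> {0<..1} \<Longrightarrow> \<Sum>S = 1 \<Longrightarrow> sum h S = 1"
    and nonneg: "\<And>x. 0 < x \<Longrightarrow> x \<le> 1 \<Longrightarrow> 0 \<le> h x"
    and t: "0 < t" "t \<le> 1"
  shows "h t = t"
proof -
  have add: "h (a + b) = h a + h b" if ab: "0 < a" "0 < b" "a + b \<le> 1" for a b
  proof -
    have "a \<le> 1" "b \<le> 1" using ab by simp_all
    then obtain S where S: "finite S" "S \<subseteq> {0<..1}" "\<Sum>S = a"
      using exists_finite_sum_avoiding[of "{}" a] ab by blast
    obtain T where T: "finite T" "T \<subseteq> {0<..1}" "T \<inter> S = {}" "\<Sum>T = b"
      using exists_finite_sum_avoiding[of S b] S(1) ab \<open>b \<le> 1\<close> by blast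
    have ST: "S \<inter> T = {}" using T by auto
    then have "\<Sum>(S \<union> T) = a + b" using S T by (simp add: sum.union_disjoint)
    then have "h (a + b) = sum h (S \<union> T)"
      using S T ab by (intro sum_eq_at_sum_if_sum_one[OF one, symmetric]) auto
    also have "\<dots> = sum h S + sum h T" using S T ST by (simp add: sum.union_disjoint)
    also have "\<dots> = h a + h b"
      using S T ab \<open>a \<le> 1\<close> \<open>b \<le> 1\<close>
      by (simp add: sum_eq_at_sum_if_sum_one[OF one, of S a] sum_eq_at_sum_if_sum_one[OF one, of T b])
    finally show ?thesis .
  qed
  have "h 1 = 1" using one[of "{1}"] by simp
  then show ?thesis using additive_nonneg_linear[OF add nonneg t] by simp
qed

lemma times_singleton_in_finite_ensembles:
  assumes "finite S" "S \<subseteq> {0<..1}" "\<Sum>S = 1" "a \<in> K"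
  shows "S \<times> {a} \<in> finite_ensembles K"
proof -
  have "sum fst (S \<times> {a}) = \<Sum>S" by (simp add: sum.cartesian_product')
  then show ?thesis using assms by (auto simp: finite_ensembles_def)
qed

lemma Union_finite_ensembles:
  fixes K :: "'a set"
  shows "\<Union>(finite_ensembles K) = {0<..1} \<times> K"
proof
  show "\<Union>(finite_ensembles K) \<subseteq> {0<..1} \<times> K"
    unfolding finite_ensembles_def by auto
  show "{0<..1} \<times> K \<subseteq> \<Union>(finite_ensembles K)"
  proof clarify
    fix s :: real and a assume s: "s \<in> {0<..1}" and "a \<in> K"
    obtain S where "finite S" "S \<subseteq> {0<..1}" "\<Sum>S = 1" "s \<in> S"
    proof (cases "s = 1")
      case True
      then show ?thesis using that[of "{1}"] by simp
    next
      case False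
      obtain R where "finite R" "R \<subseteq> {0<..1}" "s \<notin> R" "\<Sum>R = 1 - s"
        using exists_finite_sum_avoiding[of "{s}" "1 - s"] s False by auto
      then show ?thesis using that[of "insert s R"] s by auto
    qed
    then show "(s, a) \<in> \<Union>(finite_ensembles K)"
      using times_singleton_in_finite_ensembles[of S a K] \<open>a \<in> K\<close> by blast
  qed
qed

theorem theorem1p11:
  fixes K :: "'a::real_vector set"
  assumes "convex K"
  shows "probability_weight (finite_ensembles K) f \<longleftrightarrow>
           (\<forall>x\<in>{0<..1} \<times> K. f x = fst x)"
proof
  assume weight: "probability_weight (finite_ensembles K) f"
  show "\<forall>x\<in>{0<..1} \<times> K. f x = fst x"
  proof clarify
    fix t :: real and a assume t: "t \<in> {0<..1}" and a: "a \<in> K"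
    have "(\<Sum>s\<in>S. f (s, a)) = 1" if "finite S" "S \<subseteq> {0<..1}" "\<Sum>S = 1" for S
    proof -
      have "(\<Sum>s\<in>S. f (s, a)) = sum f (S \<times> {a})" by (simp add: sum.cartesian_product')
      then show ?thesis
        using weight times_singleton_in_finite_ensembles[OF that a]
        by (simp add: probability_weight_def)
    qed
    moreover have "0 \<le> f (s, a)" if "0 < s" "s \<le> 1" for s
      using weight a that by (auto simp: probability_weight_def Union_finite_ensembles)
    ultimately show "f (t, a) = fst (t, a)"
      using eq_id_if_sum_one[of "\<lambda>s. f (s, a)" t] t by simp
  qed
next
  assume eq_fst: "\<forall>x\<in>{0<..1} \<times> K. f x = fst x"
  have "sum f E = 1" if "E \<in> finite_ensembles K" for E
  proof -
    have "sum f E = sum fst E"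
      using that eq_fst by (intro sum.cong) (auto simp: finite_ensembles_def)
    then show ?thesis using that by (simp add: finite_ensembles_def)
  qed
  moreover have "f x \<in> {0..1}" if "x \<in> {0<..1} \<times> K" for x
    using that eq_fst by auto
  ultimately show "probability_weight (finite_ensembles K) f"
    by (simp add: probability_weight_def Union_finite_ensembles)
qed

end
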